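(* Let $D$ be a discrete valuation ring with maximal ideal $P=\pi D$ and field of fractions $K$. Let $A$ be a $D$-algebra with standard assumptions, and let $\widehat{A}$ be the $P$-adic completion of $A$. Then $\textnormal{Int}_K(\widehat{A})=\textnormal{Int}_K(A)$.
   Context: A $D$-algebra $A$ satisfies the standard assumptions if it is torsion-free as a $D$-module and $A\cap K = D$ inside $K\otimes_D A$; polynomials in $K[X]$ are evaluated in $K\otimes_D A$, and $\textnormal{Int}_K(A)=\{f\in K[X]\mid f(A)\subseteq A\}$. $\widehat{A}=\varprojlim A/\pi^kA$, into which $A$ embeds canonically; $\textnormal{Int}_K(\widehat{A})=\{f\in K[X]\mid f(\widehat{A})\subseteq \widehat{A}\}$, with evaluation in $K\otimes_D\widehat{A}$. *)

theory Defs
  imports "HOL-Computational_Algebra.Polynomial"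
begin

definition discrete_valuation :: "('k::field \<Rightarrow> int) \<Rightarrow> bool" where
  "discrete_valuation v \<longleftrightarrow>
     (\<forall>x y. x \<noteq> 0 \<longrightarrow> y \<noteq> 0 \<longrightarrow> v (x * y) = v x + v y) \<and>
     (\<forall>x y. x \<noteq> 0 \<longrightarrow> y \<noteq> 0 \<longrightarrow> x + y \<noteq> 0 \<longrightarrow> min (v x) (v y) \<le> v (x + y)) \<and>
     (\<forall>n. \<exists>x. x \<noteq> 0 \<and> v x = n)"

text \<open>D is a DVR whose field of fractions is the ambient field 'k:
  D is the valuation ring of a (normalised, surjective) discrete valuation on 'k.\<close>
definition is_dvr_of :: "'k::field set \<Rightarrow> bool" where
  "is_dvr_of D \<longleftrightarrow> (\<exists>v. discrete_valuation v \<and> D = {x. x = 0 \<or> 0 \<le> v x})"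

definition max_ideal :: "'k::field set \<Rightarrow> 'k set" where
  "max_ideal D = {x \<in> D. \<not> (\<exists>y\<in>D. x * y = 1)}"

definition K_algebra_map :: "('k::field \<Rightarrow> 'b::ring_1) \<Rightarrow> bool" where
  "K_algebra_map \<iota> \<longleftrightarrow>
     (\<forall>x y. \<iota> (x + y) = \<iota> x + \<iota> y) \<and> (\<forall>x y. \<iota> (x * y) = \<iota> x * \<iota> y) \<and>
     \<iota> 1 = 1 \<and> (\<forall>x b. \<iota> x * b = b * \<iota> x)"

definition D_subalgebra :: "('k::field \<Rightarrow> 'b::ring_1) \<Rightarrow> 'k set \<Rightarrow> 'b set \<Rightarrow> bool" where
  "D_subalgebra \<iota> D A \<longleftrightarrow>
     (\<forall>a\<in>A. \<forall>b\<in>A. a + b \<in> A \<and> a * b \<in> A \<and> - a \<in> A) \<and> 0 \<in> A \<and> 1 \<in> A \<and>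
     \<iota> ` D \<subseteq> A"

text \<open>B is (canonically isomorphic to) K (x)_D A: every element is a/d with a in A, d in D nonzero.
  (Torsion-freeness of A is automatic since the elements iota d, d nonzero, are units of B.)\<close>
definition is_K_tensor :: "('k::field \<Rightarrow> 'b::ring_1) \<Rightarrow> 'k set \<Rightarrow> 'b set \<Rightarrow> bool" where
  "is_K_tensor \<iota> D A \<longleftrightarrow> K_algebra_map \<iota> \<and> D_subalgebra \<iota> D A \<and>
     (\<forall>b. \<exists>d\<in>D. d \<noteq> 0 \<and> \<iota> d * b \<in> A)"

text \<open>Standard assumptions: torsion free (automatic here) and A \<inter> K = D inside K (x)_D A.\<close>
definition standard_assumptions :: "('k::field \<Rightarrow> 'b::ring_1) \<Rightarrow> 'k set \<Rightarrow> 'b set \<Rightarrow> bool" where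
  "standard_assumptions \<iota> D A \<longleftrightarrow> is_K_tensor \<iota> D A \<and> (\<forall>x. \<iota> x \<in> A \<longleftrightarrow> x \<in> D)"

definition eval_alg :: "('k::field \<Rightarrow> 'b::ring_1) \<Rightarrow> 'k poly \<Rightarrow> 'b \<Rightarrow> 'b" where
  "eval_alg \<iota> f b = (\<Sum>i\<le>degree f. \<iota> (coeff f i) * b ^ i)"

definition Int_K :: "('k::field \<Rightarrow> 'b::ring_1) \<Rightarrow> 'b set \<Rightarrow> 'k poly set" where
  "Int_K \<iota> A = {f. \<forall>a\<in>A. eval_alg \<iota> f a \<in> A}"

definition pow_ideal :: "('k::field \<Rightarrow> 'b::ring_1) \<Rightarrow> 'k \<Rightarrow> 'b set \<Rightarrow> nat \<Rightarrow> 'b set" where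
  "pow_ideal \<iota> \<pi> A k = (\<lambda>a. \<iota> (\<pi> ^ k) * a) ` A"

text \<open>Ahat (inside the ambient algebra C, with structure map iota') together with maps
  p k : Ahat -> A (representatives of the components in A / pi^k A) is the inverse limit
  lim A/pi^k A: the p k are compatible D-algebra homomorphisms modulo pi^k A, and the
  induced map Ahat -> lim A/pi^k A is bijective.\<close>
definition is_padic_completion ::
  "('k::field \<Rightarrow> 'b::ring_1) \<Rightarrow> 'k set \<Rightarrow> 'k \<Rightarrow> 'b set \<Rightarrow>
   ('k \<Rightarrow> 'c::ring_1) \<Rightarrow> 'c set \<Rightarrow> (nat \<Rightarrow> 'c \<Rightarrow> 'b) \<Rightarrow> bool" where
  "is_padic_completion \<iota> D \<pi> A \<iota>' Ahat p \<longleftrightarrow>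
     (\<forall>k. \<forall>x\<in>Ahat. p k x \<in> A) \<and>
     (\<forall>k. \<forall>x\<in>Ahat. p (Suc k) x - p k x \<in> pow_ideal \<iota> \<pi> A k) \<and>
     (\<forall>k. \<forall>x\<in>Ahat. \<forall>y\<in>Ahat. p k (x + y) - (p k x + p k y) \<in> pow_ideal \<iota> \<pi> A k) \<and>
     (\<forall>k. \<forall>x\<in>Ahat. \<forall>y\<in>Ahat. p k (x * y) - p k x * p k y \<in> pow_ideal \<iota> \<pi> A k) \<and>
     (\<forall>k. p k 1 - 1 \<in> pow_ideal \<iota> \<pi> A k) \<and>
     (\<forall>k. \<forall>d\<in>D. \<forall>x\<in>Ahat. p k (\<iota>' d * x) - \<iota> d * p k x \<in> pow_ideal \<iota> \<pi> A k) \<and>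
     (\<forall>x\<in>Ahat. \<forall>y\<in>Ahat. (\<forall>k. p k x - p k y \<in> pow_ideal \<iota> \<pi> A k) \<longrightarrow> x = y) \<and>
     (\<forall>a. (\<forall>k. a k \<in> A) \<longrightarrow> (\<forall>k. a (Suc k) - a k \<in> pow_ideal \<iota> \<pi> A k) \<longrightarrow>
          (\<exists>x\<in>Ahat. \<forall>k. p k x - a k \<in> pow_ideal \<iota> \<pi> A k))"

end

theory Submission
  imports Defs
begin

text \<open>Multiplying by a power \<open>\<pi>\<^sup>m\<close> turns any \<open>f \<in> K[X]\<close> into \<open>g = \<pi>\<^sup>m f \<in> D[X]\<close>, and a
  polynomial over \<open>D\<close> commutes, modulo \<open>\<pi>\<^sup>k A\<close>, with the projections \<open>p k\<close> of the
  completion. If \<open>f\<close> is integer-valued on \<open>Ahat\<close> and \<open>a \<in> A\<close> is approximated by \<open>x \<in> Ahat\<close>,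
  then \<open>g(a) \<equiv> p m (\<pi>\<^sup>m f(x)) \<equiv> 0\<close> modulo \<open>\<pi>\<^sup>m A\<close>, so \<open>f(a) \<in> A\<close>. If \<open>f\<close> is
  integer-valued on \<open>A\<close> and \<open>x \<in> Ahat\<close>, every approximation \<open>p (k + m) (g(x)) \<equiv> \<pi>\<^sup>m f(p (k + m) x)\<close>
  lies in \<open>\<pi>\<^sup>m A\<close>; since \<open>Ahat\<close> is complete, \<open>g(x)\<close> is then divisible by \<open>\<pi>\<^sup>m\<close> in \<open>Ahat\<close>,
  so \<open>f(x) \<in> Ahat\<close>.\<close>

lemma discrete_valuation_one:
  assumes "discrete_valuation v" shows "v 1 = 0"
  using assms unfolding discrete_valuation_def by (metis add_cancel_right_right mult_1 one_neq_zero)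

lemma discrete_valuation_inverse:
  assumes "discrete_valuation v" "x \<noteq> 0" shows "v (inverse x) = - v x"
  using assms discrete_valuation_one[OF assms(1)] unfolding discrete_valuation_def
  by (metis add.commute eq_neg_iff_add_eq_0 inverse_nonzero_iff_nonzero right_inverse)

lemma discrete_valuation_power:
  assumes "discrete_valuation v" "x \<noteq> 0" shows "v (x ^ m) = int m * v x"
proof (induction m)
  case 0 then show ?case using discrete_valuation_one[OF assms(1)] by simp
next
  case (Suc m)
  then show ?case using assms unfolding discrete_valuation_def
    by (simp add: algebra_simps)
qed

lemma dvr_mult_closed:
  assumes "is_dvr_of D" "x \<in> D" "y \<in> D" shows "x * y \<in> D"
proof -
  obtain v where "discrete_valuation v" and D: "D = {x. x = 0 \<or> 0 \<le> v x}"
    using assms(1) unfolding is_dvr_of_def by blast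
  then have "v (x * y) = v x + v y" if "x \<noteq> 0" "y \<noteq> 0"
    using that unfolding discrete_valuation_def by blast
  then show ?thesis using assms(2,3) D by fastforce
qed

lemma dvr_uniformizer:
  assumes "is_dvr_of D" "\<pi> \<in> D" "max_ideal D = (\<lambda>d. \<pi> * d) ` D"
  shows dvr_uniformizer_nonzero: "\<pi> \<noteq> 0"
    and dvr_uniformizer_clears: "\<exists>m. \<pi> ^ m * c \<in> D"
proof -
  obtain v where v: "discrete_valuation v" and D: "D = {x. x = 0 \<or> 0 \<le> v x}"
    using assms(1) unfolding is_dvr_of_def by blast
  have mult: "v (x * y) = v x + v y" if "x \<noteq> 0" "y \<noteq> 0" for x y
    using v that unfolding discrete_valuation_def by blast
  have unit_iff: "(\<exists>y\<in>D. x * y = 1) \<longleftrightarrow> v x = 0" if "x \<in> D" "x \<noteq> 0" for x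
  proof
    assume "\<exists>y\<in>D. x * y = 1"
    then have "inverse x \<in> D" using that by (metis inverse_unique)
    then show "v x = 0" using that D discrete_valuation_inverse[OF v, of x] by auto
  next
    assume "v x = 0"
    then show "\<exists>y\<in>D. x * y = 1"
      using that D discrete_valuation_inverse[OF v, of x] by (intro bexI[of _ "inverse x"]) auto
  qed
  obtain x where x: "x \<noteq> 0" "v x = 1"
    using v unfolding discrete_valuation_def by blast
  have "x \<in> D" using x D by simp
  then have "x \<in> max_ideal D" using x unit_iff[of x] unfolding max_ideal_def by simp
  then show nz: "\<pi> \<noteq> 0" using assms(3) x(1) by auto
  have "\<pi> \<in> max_ideal D" using assms(3) D discrete_valuation_one[OF v] by force
  then have v\<pi>: "v \<pi> \<ge> 1" using unit_iff assms(2) nz D unfolding max_ideal_def by force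
  show "\<exists>m. \<pi> ^ m * c \<in> D"
  proof (cases "c = 0")
    case False
    have "v (\<pi> ^ nat (- v c) * c) = int (nat (- v c)) * v \<pi> + v c"
      using mult[of "\<pi> ^ nat (- v c)" c] discrete_valuation_power[OF v nz] nz False by simp
    also have "\<dots> \<ge> 0" using mult_left_mono[OF v\<pi>, of "int (nat (- v c))"] by linarith
    finally show ?thesis using D by blast
  qed (use D in auto)
qed

lemma dvr_one: "is_dvr_of D \<Longrightarrow> 1 \<in> D"
  unfolding is_dvr_of_def using discrete_valuation_one by fastforce

lemma dvr_power_closed: "is_dvr_of D \<Longrightarrow> x \<in> D \<Longrightarrow> x ^ n \<in> D"
  by (induction n) (simp_all add: dvr_one dvr_mult_closed)

lemma dvr_clear_denominators:
  fixes f :: "'k::field poly"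
  assumes "is_dvr_of D" "\<pi> \<in> D" "max_ideal D = (\<lambda>d. \<pi> * d) ` D"
  shows "\<exists>m. \<forall>i. coeff (smult (\<pi> ^ m) f) i \<in> D"
proof -
  have "\<forall>i. \<exists>m. \<pi> ^ m * coeff f i \<in> D" using dvr_uniformizer_clears[OF assms] by blast
  then obtain e where e: "\<And>i. \<pi> ^ e i * coeff f i \<in> D" by metis
  define m where "m = Max (e ` {..degree f})"
  have "\<pi> ^ m * coeff f i \<in> D" for i
  proof (cases "i \<le> degree f")
    case True
    then have "\<pi> ^ m * coeff f i = \<pi> ^ (m - e i) * (\<pi> ^ e i * coeff f i)"
      unfolding m_def by (simp add: mult.assoc flip: power_add)
    then show ?thesis using e dvr_mult_closed dvr_power_closed assms(1,2) by metis
  next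
    case False
    then show ?thesis using e[of i] by (simp add: coeff_eq_0)
  qed
  then show ?thesis by auto
qed

locale pi_adic_filtration =
  fixes \<iota> :: "'k::field \<Rightarrow> 'b::ring_1" and D :: "'k set" and A :: "'b set" and \<pi> :: 'k
  assumes algebra_map: "K_algebra_map \<iota>" and subalgebra: "D_subalgebra \<iota> D A"
    and pi_power_in_D: "\<pi> ^ j \<in> D" and pi_nonzero: "\<pi> \<noteq> 0"
begin

abbreviation I :: "nat \<Rightarrow> 'b set" where "I k \<equiv> pow_ideal \<iota> \<pi> A k"

lemma iota_mult: "\<iota> (x * y) = \<iota> x * \<iota> y"
  and iota_one: "\<iota> 1 = 1"
  and iota_central: "\<iota> x * b = b * \<iota> x"
  using algebra_map unfolding K_algebra_map_def by blast+

lemma A_add: "a \<in> A \<Longrightarrow> b \<in> A \<Longrightarrow> a + b \<in> A"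
  and A_mult: "a \<in> A \<Longrightarrow> b \<in> A \<Longrightarrow> a * b \<in> A"
  and A_uminus: "a \<in> A \<Longrightarrow> - a \<in> A"
  and A_zero: "0 \<in> A"
  and A_one: "1 \<in> A"
  and iota_in_A: "d \<in> D \<Longrightarrow> \<iota> d \<in> A"
  using subalgebra unfolding D_subalgebra_def by blast+

lemma A_power: "a \<in> A \<Longrightarrow> a ^ n \<in> A"
  by (induction n) (auto intro: A_mult A_one)

lemma A_sum: "(\<And>i. i \<in> S \<Longrightarrow> F i \<in> A) \<Longrightarrow> sum F S \<in> A"
  by (induction S rule: infinite_finite_induct) (auto intro: A_add A_zero)

lemma iota_pi_power_in_A: "\<iota> (\<pi> ^ k) \<in> A"
  by (rule iota_in_A[OF pi_power_in_D])

lemma iota_cancel: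
  assumes "c \<noteq> 0" "\<iota> c * u = \<iota> c * w" shows "u = w"
proof -
  have inv: "\<iota> (inverse c) * \<iota> c = 1" using assms(1) by (simp flip: iota_mult add: iota_one)
  have "u = \<iota> (inverse c) * \<iota> c * u" by (simp add: inv)
  also have "\<dots> = \<iota> (inverse c) * \<iota> c * w" by (simp add: mult.assoc assms(2))
  finally show ?thesis by (simp add: inv)
qed

lemma eval_alg_smult: "c \<noteq> 0 \<Longrightarrow> eval_alg \<iota> (smult c f) b = \<iota> c * eval_alg \<iota> f b"
  unfolding eval_alg_def by (simp add: sum_distrib_left iota_mult mult.assoc)

lemma mem_pow_ideal_iff: "u \<in> I k \<longleftrightarrow> (\<exists>a\<in>A. u = \<iota> (\<pi> ^ k) * a)"
  unfolding pow_ideal_def by auto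

lemma pow_ideal_0: "I 0 = A"
  unfolding pow_ideal_def by (simp add: iota_one)

lemma pow_ideal_zero: "0 \<in> I k"
  unfolding mem_pow_ideal_iff using A_zero by force

lemma pow_ideal_add: "u \<in> I k \<Longrightarrow> w \<in> I k \<Longrightarrow> u + w \<in> I k"
  unfolding mem_pow_ideal_iff by (metis A_add distrib_left)

lemma pow_ideal_uminus: "u \<in> I k \<Longrightarrow> - u \<in> I k"
  unfolding mem_pow_ideal_iff by (metis A_uminus mult_minus_right)

lemma pow_ideal_mult_left: "a \<in> A \<Longrightarrow> u \<in> I k \<Longrightarrow> a * u \<in> I k"
  unfolding mem_pow_ideal_iff by (metis A_mult iota_central mult.assoc)

lemma pow_ideal_mult_right: "a \<in> A \<Longrightarrow> u \<in> I k \<Longrightarrow> u * a \<in> I k"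
  unfolding mem_pow_ideal_iff by (metis A_mult mult.assoc)

lemma pow_ideal_sum: "(\<And>i. i \<in> S \<Longrightarrow> F i \<in> I k) \<Longrightarrow> sum F S \<in> I k"
  by (induction S rule: infinite_finite_induct) (auto intro: pow_ideal_add pow_ideal_zero)

lemma pow_ideal_antimono: "k \<le> j \<Longrightarrow> I j \<subseteq> I k"
proof
  fix u assume "k \<le> j" "u \<in> I j"
  then obtain a n where "a \<in> A" "u = \<iota> (\<pi> ^ (k + n)) * a"
    unfolding mem_pow_ideal_iff by (metis le_Suc_ex)
  then show "u \<in> I k"
    unfolding mem_pow_ideal_iff power_add iota_mult
    by (metis A_mult iota_pi_power_in_A mult.assoc)
qed

lemma pow_ideal_cancel:
  assumes "\<iota> (\<pi> ^ m) * u \<in> I (k + m)" shows "u \<in> I k"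
proof -
  obtain a where a: "a \<in> A" "\<iota> (\<pi> ^ m) * u = \<iota> (\<pi> ^ (k + m)) * a"
    using assms unfolding mem_pow_ideal_iff by blast
  moreover have "\<pi> ^ (k + m) = \<pi> ^ m * \<pi> ^ k" by (simp add: power_add)
  ultimately have "\<iota> (\<pi> ^ m) * u = \<iota> (\<pi> ^ m) * (\<iota> (\<pi> ^ k) * a)"
    by (simp only: iota_mult mult.assoc)
  then have "u = \<iota> (\<pi> ^ k) * a"
    using iota_cancel[OF power_not_zero[OF pi_nonzero]] by blast
  then show ?thesis unfolding mem_pow_ideal_iff using a(1) by blast
qed

lemma cong_sym: "u - w \<in> I k \<Longrightarrow> w - u \<in> I k"
  using pow_ideal_uminus by fastforce

lemma cong_trans: "u - v \<in> I k \<Longrightarrow> v - w \<in> I k \<Longrightarrow> u - w \<in> I k"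
  using pow_ideal_add by fastforce

lemma cong_sum: "(\<And>i. i \<in> S \<Longrightarrow> F i - G i \<in> I k) \<Longrightarrow> sum F S - sum G S \<in> I k"
  using pow_ideal_sum[of S "\<lambda>i. F i - G i"] by (simp add: sum_subtractf)

lemma cong_power:
  assumes "a \<in> A" "a' \<in> A" "a - a' \<in> I k" shows "a ^ n - a' ^ n \<in> I k"
proof (induction n)
  case (Suc n)
  have "a ^ Suc n - a' ^ Suc n = a ^ n * (a - a') + (a ^ n - a' ^ n) * a'"
    by (simp add: algebra_simps power_commutes)
  then show ?case
    using Suc assms by (metis pow_ideal_add pow_ideal_mult_left pow_ideal_mult_right A_power)
qed (simp add: pow_ideal_zero)

lemma eval_alg_in_A: "(\<And>i. coeff g i \<in> D) \<Longrightarrow> a \<in> A \<Longrightarrow> eval_alg \<iota> g a \<in> A"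
  unfolding eval_alg_def by (intro A_sum A_mult iota_in_A A_power)

lemma eval_alg_cong:
  assumes "\<And>i. coeff g i \<in> D" "a \<in> A" "a' \<in> A" "a - a' \<in> I k"
  shows "eval_alg \<iota> g a - eval_alg \<iota> g a' \<in> I k"
  unfolding eval_alg_def
proof (rule cong_sum)
  fix i
  have "\<iota> (coeff g i) * (a ^ i - a' ^ i) \<in> I k"
    using assms by (intro pow_ideal_mult_left iota_in_A cong_power)
  then show "\<iota> (coeff g i) * a ^ i - \<iota> (coeff g i) * a' ^ i \<in> I k"
    by (simp add: algebra_simps)
qed

end

locale padic_completion =
  A: pi_adic_filtration \<iota> D A \<pi> + Ahat: pi_adic_filtration \<iota>' D Ahat \<pi>
  for \<iota> :: "'k::field \<Rightarrow> 'b::ring_1" and D A \<pi> and \<iota>' :: "'k \<Rightarrow> 'c::ring_1" and Ahat +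
  fixes p :: "nat \<Rightarrow> 'c \<Rightarrow> 'b"
  assumes completion: "is_padic_completion \<iota> D \<pi> A \<iota>' Ahat p"
begin

lemma p_in_A: "x \<in> Ahat \<Longrightarrow> p k x \<in> A"
  and p_Suc: "x \<in> Ahat \<Longrightarrow> p (Suc k) x - p k x \<in> A.I k"
  and p_add: "x \<in> Ahat \<Longrightarrow> y \<in> Ahat \<Longrightarrow> p k (x + y) - (p k x + p k y) \<in> A.I k"
  and p_mult: "x \<in> Ahat \<Longrightarrow> y \<in> Ahat \<Longrightarrow> p k (x * y) - p k x * p k y \<in> A.I k"
  and p_one: "p k 1 - 1 \<in> A.I k"
  and p_scale: "d \<in> D \<Longrightarrow> x \<in> Ahat \<Longrightarrow> p k (\<iota>' d * x) - \<iota> d * p k x \<in> A.I k"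
  and p_inject: "x \<in> Ahat \<Longrightarrow> y \<in> Ahat \<Longrightarrow> (\<And>k. p k x - p k y \<in> A.I k) \<Longrightarrow> x = y"
  and p_limit: "(\<And>k. a k \<in> A) \<Longrightarrow> (\<And>k. a (Suc k) - a k \<in> A.I k) \<Longrightarrow>
      \<exists>x\<in>Ahat. \<forall>k. p k x - a k \<in> A.I k"
  using completion unfolding is_padic_completion_def by blast+

lemma p_zero: "p k 0 \<in> A.I k"
  using p_add[OF Ahat.A_zero Ahat.A_zero, of k] A.pow_ideal_uminus by fastforce

lemma p_sum: "(\<And>i. i \<in> S \<Longrightarrow> F i \<in> Ahat) \<Longrightarrow> p k (sum F S) - (\<Sum>i\<in>S. p k (F i)) \<in> A.I k"
proof (induction S rule: infinite_finite_induct)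
  case (insert i S)
  have "p k (F i + sum F S) - (p k (F i) + p k (sum F S)) \<in> A.I k"
    using insert.prems by (intro p_add Ahat.A_sum) auto
  moreover have "(p k (F i) + p k (sum F S)) - (p k (F i) + (\<Sum>i\<in>S. p k (F i))) \<in> A.I k"
    using insert by simp
  ultimately have "p k (F i + sum F S) - (p k (F i) + (\<Sum>i\<in>S. p k (F i))) \<in> A.I k"
    by (rule A.cong_trans)
  with insert.hyps show ?case by simp
qed (simp_all add: p_zero)

lemma p_power: "x \<in> Ahat \<Longrightarrow> p k (x ^ n) - p k x ^ n \<in> A.I k"
proof (induction n)
  case (Suc n)
  have "p k (x ^ n * x) - p k (x ^ n) * p k x \<in> A.I k"
    using Suc.prems by (intro p_mult Ahat.A_power)
  moreover have "(p k (x ^ n) - p k x ^ n) * p k x \<in> A.I k"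
    using Suc by (intro A.pow_ideal_mult_right p_in_A)
  then have "p k (x ^ n) * p k x - p k x ^ n * p k x \<in> A.I k"
    by (simp add: algebra_simps)
  ultimately have "p k (x ^ n * x) - p k x ^ n * p k x \<in> A.I k"
    by (rule A.cong_trans)
  then show ?case by (simp flip: power_Suc2)
qed (simp add: p_one)

lemma p_eval_alg:
  assumes "\<And>i. coeff g i \<in> D" "x \<in> Ahat"
  shows "p k (eval_alg \<iota>' g x) - eval_alg \<iota> g (p k x) \<in> A.I k"
  unfolding eval_alg_def
proof (rule A.cong_trans[OF p_sum A.cong_sum])
  show "\<iota>' (coeff g i) * x ^ i \<in> Ahat" for i
    using assms by (intro Ahat.A_mult Ahat.iota_in_A Ahat.A_power)
  fix i
  have "\<iota> (coeff g i) * (p k (x ^ i) - p k x ^ i) \<in> A.I k"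
    using assms by (intro A.pow_ideal_mult_left A.iota_in_A p_power)
  then have "\<iota> (coeff g i) * p k (x ^ i) - \<iota> (coeff g i) * p k x ^ i \<in> A.I k"
    by (simp add: algebra_simps)
  then show "p k (\<iota>' (coeff g i) * x ^ i) - \<iota> (coeff g i) * p k x ^ i \<in> A.I k"
    using assms by (intro A.cong_trans[OF p_scale]) (simp_all add: Ahat.A_power)
qed

lemma p_compatible: "x \<in> Ahat \<Longrightarrow> p (k + j) x - p k x \<in> A.I k"
proof (induction j)
  case (Suc j)
  have "p (Suc (k + j)) x - p (k + j) x \<in> A.I k"
    using p_Suc[OF Suc.prems] A.pow_ideal_antimono[of k "k + j"] by auto
  then show ?case using A.cong_trans[OF _ Suc.IH[OF Suc.prems]] by simp
qed (simp add: A.pow_ideal_zero)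

lemma p_constant_limit: "a \<in> A \<Longrightarrow> \<exists>x\<in>Ahat. \<forall>k. p k x - a \<in> A.I k"
  using p_limit[of "\<lambda>_. a"] by (simp add: A.pow_ideal_zero)

text \<open>The quotients of the approximations by \<open>\<pi>\<^sup>m\<close> form a Cauchy sequence in \<open>A\<close>, and its
  limit is the quotient of \<open>z\<close>.\<close>

lemma divisible_by_pi_power:
  assumes z: "z \<in> Ahat" and div: "\<And>k. p (k + m) z \<in> A.I m"
  shows "\<exists>y\<in>Ahat. z = \<iota>' (\<pi> ^ m) * y"
proof -
  have "\<forall>k. \<exists>b. b \<in> A \<and> p (k + m) z = \<iota> (\<pi> ^ m) * b"
    using div unfolding A.mem_pow_ideal_iff by blast
  then obtain b where b: "\<And>k. b k \<in> A" "\<And>k. p (k + m) z = \<iota> (\<pi> ^ m) * b k"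
    by (metis (mono_tags))
  have "b (Suc k) - b k \<in> A.I k" for k
  proof (rule A.pow_ideal_cancel)
    show "\<iota> (\<pi> ^ m) * (b (Suc k) - b k) \<in> A.I (k + m)"
      using p_Suc[OF z, of "k + m"] b(2)[of k] b(2)[of "Suc k"] by (simp add: algebra_simps)
  qed
  then obtain y where y: "y \<in> Ahat" "\<And>k. p k y - b k \<in> A.I k"
    using p_limit b(1) by blast
  have "z = \<iota>' (\<pi> ^ m) * y"
  proof (rule p_inject[OF z])
    show "\<iota>' (\<pi> ^ m) * y \<in> Ahat" using y(1) by (intro Ahat.A_mult Ahat.iota_pi_power_in_A)
    fix k
    have 1: "p k z - p (k + m) z \<in> A.I k"
      using A.cong_sym[OF p_compatible[OF z]] .
    have "\<iota> (\<pi> ^ m) * (b k - p k y) \<in> A.I k"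
      using y A.cong_sym by (intro A.pow_ideal_mult_left A.iota_pi_power_in_A) blast
    then have 2: "p (k + m) z - \<iota> (\<pi> ^ m) * p k y \<in> A.I k"
      by (simp add: b(2) algebra_simps)
    have 3: "\<iota> (\<pi> ^ m) * p k y - p k (\<iota>' (\<pi> ^ m) * y) \<in> A.I k"
      using A.cong_sym[OF p_scale[OF A.pi_power_in_D y(1)]] .
    show "p k z - p k (\<iota>' (\<pi> ^ m) * y) \<in> A.I k"
      using A.cong_trans[OF A.cong_trans[OF 1 2] 3] .
  qed
  then show ?thesis using y(1) by blast
qed

lemma Int_K_completion_imp_Int_K:
  assumes f: "f \<in> Int_K \<iota>' Ahat" and g: "\<And>i. coeff (smult (\<pi> ^ m) f) i \<in> D"
  shows "f \<in> Int_K \<iota> A"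
  unfolding Int_K_def
proof (intro CollectI ballI)
  fix a assume a: "a \<in> A"
  obtain x where x: "x \<in> Ahat" "\<And>k. p k x - a \<in> A.I k"
    using p_constant_limit[OF a] by blast
  define y where "y = eval_alg \<iota>' f x"
  have y: "y \<in> Ahat" using f x(1) unfolding Int_K_def y_def by blast
  let ?g = "smult (\<pi> ^ m) f"
  have "eval_alg \<iota> ?g a - eval_alg \<iota> ?g (p m x) \<in> A.I m"
    using g a x A.cong_sym by (intro A.eval_alg_cong p_in_A) blast+
  moreover have "eval_alg \<iota> ?g (p m x) - p m (\<iota>' (\<pi> ^ m) * y) \<in> A.I m"
    using A.cong_sym[OF p_eval_alg[OF g x(1)]]
    by (simp add: y_def Ahat.eval_alg_smult A.pi_nonzero)
  moreover have "p m (\<iota>' (\<pi> ^ m) * y) - \<iota> (\<pi> ^ m) * p m y \<in> A.I m"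
    using y by (intro p_scale A.pi_power_in_D)
  ultimately have "eval_alg \<iota> ?g a - \<iota> (\<pi> ^ m) * p m y \<in> A.I m"
    by (meson A.cong_trans)
  moreover have "\<iota> (\<pi> ^ m) * p m y \<in> A.I m"
    using y p_in_A unfolding A.mem_pow_ideal_iff by blast
  ultimately have "eval_alg \<iota> ?g a \<in> A.I m"
    using A.pow_ideal_add by fastforce
  then have "\<iota> (\<pi> ^ m) * eval_alg \<iota> f a \<in> A.I (0 + m)"
    by (simp add: A.eval_alg_smult A.pi_nonzero)
  then show "eval_alg \<iota> f a \<in> A"
    using A.pow_ideal_cancel A.pow_ideal_0 by blast
qed

lemma Int_K_imp_Int_K_completion:
  assumes f: "f \<in> Int_K \<iota> A" and g: "\<And>i. coeff (smult (\<pi> ^ m) f) i \<in> D"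
  shows "f \<in> Int_K \<iota>' Ahat"
  unfolding Int_K_def
proof (intro CollectI ballI)
  fix x assume x: "x \<in> Ahat"
  define z where "z = eval_alg \<iota>' (smult (\<pi> ^ m) f) x"
  have "p (k + m) z \<in> A.I m" for k
  proof -
    have "p (k + m) z - eval_alg \<iota> (smult (\<pi> ^ m) f) (p (k + m) x) \<in> A.I m"
      using p_eval_alg[OF g x] A.pow_ideal_antimono[of m "k + m"] unfolding z_def by auto
    moreover have "eval_alg \<iota> f (p (k + m) x) \<in> A"
      using f p_in_A[OF x] unfolding Int_K_def by blast
    then have "eval_alg \<iota> (smult (\<pi> ^ m) f) (p (k + m) x) \<in> A.I m"
      unfolding A.mem_pow_ideal_iff by (auto simp: A.eval_alg_smult A.pi_nonzero)
    ultimately show ?thesis using A.pow_ideal_add by fastforce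
  qed
  then obtain y where y: "y \<in> Ahat" "z = \<iota>' (\<pi> ^ m) * y"
    using divisible_by_pi_power Ahat.eval_alg_in_A[OF g x] unfolding z_def by blast
  then have "\<iota>' (\<pi> ^ m) * eval_alg \<iota>' f x = \<iota>' (\<pi> ^ m) * y"
    unfolding z_def by (simp add: Ahat.eval_alg_smult A.pi_nonzero)
  then show "eval_alg \<iota>' f x \<in> Ahat"
    using Ahat.iota_cancel[OF power_not_zero[OF A.pi_nonzero]] y(1) by blast
qed

end

theorem mainTheorem10:
  fixes D :: "'k::field set" and \<pi> :: 'k
    and \<iota> :: "'k \<Rightarrow> 'b::ring_1" and A :: "'b set"
    and \<iota>' :: "'k \<Rightarrow> 'c::ring_1" and Ahat :: "'c set" and p :: "nat \<Rightarrow> 'c \<Rightarrow> 'b"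
  assumes "is_dvr_of D"
    and "\<pi> \<in> D" and "max_ideal D = (\<lambda>d. \<pi> * d) ` D"
    and "standard_assumptions \<iota> D A"
    and "is_K_tensor \<iota>' D Ahat"
    and "is_padic_completion \<iota> D \<pi> A \<iota>' Ahat p"
  shows "Int_K \<iota>' Ahat = Int_K \<iota> A"
proof -
  have A: "K_algebra_map \<iota>" "D_subalgebra \<iota> D A"
    using assms(4) unfolding standard_assumptions_def is_K_tensor_def by blast+
  have Ahat: "K_algebra_map \<iota>'" "D_subalgebra \<iota>' D Ahat"
    using assms(5) unfolding is_K_tensor_def by blast+
  interpret padic_completion \<iota> D A \<pi> \<iota>' Ahat p
    by (intro padic_completion.intro pi_adic_filtration.intro padic_completion_axioms.intro
        A Ahat assms(6) dvr_power_closed[OF assms(1,2)] dvr_uniformizer_nonzero[OF assms(1-3)])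
  show ?thesis
  proof (intro set_eqI iffI)
    fix f
    obtain m where "\<And>i. coeff (smult (\<pi> ^ m) f) i \<in> D"
      using dvr_clear_denominators[OF assms(1-3)] by blast
    then show "f \<in> Int_K \<iota>' Ahat \<Longrightarrow> f \<in> Int_K \<iota> A"
      and "f \<in> Int_K \<iota> A \<Longrightarrow> f \<in> Int_K \<iota>' Ahat"
      using Int_K_completion_imp_Int_K Int_K_imp_Int_K_completion by blast+
  qed
qed

end
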